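(* Let $F:\mathcal{G}_{\Sigma,\Delta,\pi}\to\mathcal{G}_{\Sigma,\Delta,\pi}$ be a causal graph dynamics with a monotonic local rule $f$ of radius $r$, and assume that $\mathrm{Conj}_F(R)$ is a singleton $\{\overline{F}(R)\}$ for every renaming $R$. Let $\widetilde{F}:\mathbf{G}_{\Sigma,\Delta,\pi}\to\mathbf{G}_{\Sigma,\Delta,\pi}$ be the functor with $\widetilde{F}(G)=F(G)$ and, for $m:G\to H$, $\widetilde{F}(m):F(G)\to F(H)$ the morphism with $|\widetilde{F}(m)|=\overline{F}(|m|)$. Then $\widetilde{F}$ is the pointwise left Kan extension of $\widetilde{f}$ along $\widetilde{i}$, i.e. $\widetilde{F}\cong\mathrm{Colim}(\widetilde{f}\circ\mathrm{Proj}_{\widetilde{i}/-})$.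
   Context: Fix an uncountably infinite set $\mathcal{V}$, sets $\Sigma,\Delta$, finite $\pi$. Graphs: countable $V(G)\subset\mathcal{V}$, a set $E(G)$ of pairwise disjoint two-element subsets of $V(G)\times\pi$, partial labelings $\sigma(G),\delta(G)$; $\subseteq$ is componentwise inclusion. Renamings: bijections of $\mathcal{V}$ acting naturally on graphs and pointed graphs. $\mathrm{Conj}_F(R)=\{R'\mid F\circ R=R'\circ F\}$. Disk $G^r_c$: vertices at distance $\le r+1$ from $c$, edges with an endpoint at distance $\le r$, vertex labels restricted to distance $\le r$; $\mathcal{D}^r$ the radius-$r$ disks, compared by inclusion with equal centers. A local rule of radius $r$: $f:\mathcal{D}^r\to$ graphs with renaming covariance, preservation of empty intersections, bounded output size, consistency of $f(G^r_u),f(G^r_v)$; CGD $F(G)=\bigcup_{v\in V(G)}f(G^r_v)$. Category $\mathbf{G}_{\Sigma,\Delta,\pi}$: objects graphs, morphism $m:G\to H$ a renaming $|m|$ with $|m|(G)\subseteq H$, composition by composition of renamings. Category $\mathbf{D}^r_{\Sigma,\Delta,\pi}$: objects $(H,\{c\})$ for $(H,c)\in\mathcal{D}^r$ and $(\varnothing,\emptyset)$; morphisms $m:(H_1,C_1)\to(H_2,C_2)$ are morphisms $H_1\to H_2$ with $|m|(C_1)\subseteq C_2$. $\widetilde{i}:\mathbf{D}^r\to\mathbf{G}$ drops the second component (identity on morphisms). $\widetilde{f}:\mathbf{D}^r\to\mathbf{G}$: $\widetilde{f}((H,\{c\}))=f((H,c))$, $\widetilde{f}((\varnothing,\emptyset))=\varnothing$,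 $|\widetilde{f}(m)|=\overline{F}(|m|)$. For a graph $G$, $\widetilde{i}/G$ is the comma category (objects $((H,C),m:H\to G)$, morphisms $n:((H_1,C_1),m\circ n)\to((H_2,C_2),m)$) with projection $\mathrm{Proj}_{\widetilde{i}/G}$ to $\mathbf{D}^r$; $\widetilde{i}/-$ is functorial in $G$ by postcomposition. Given functors $i:\mathbf{A}\to\mathbf{B}$, $f:\mathbf{A}\to\mathbf{C}$, a pointwise left Kan extension of $f$ along $i$ is a functor $\Phi:\mathbf{B}\to\mathbf{C}$ with $\Phi\cong\mathrm{Colim}(f\circ\mathrm{Proj}_{i/-})$. *)

theory Defs
  imports Main "HOL-Library.Countable_Set"
begin

text \<open>Vertex names range over a type 'v (standing for the uncountable set V),
ports over 'p (finite), vertex labels over 's (Sigma), edge labels over 'd (Delta).\<close>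

record ('v,'p,'s,'d) graph =
  gV :: "'v set"
  gE :: "('v \<times> 'p) set set"
  gsig :: "'v \<Rightarrow> 's option"
  gdel :: "('v \<times> 'p) set \<Rightarrow> 'd option"

definition wf_graph :: "('v,'p,'s,'d) graph \<Rightarrow> bool" where
  "wf_graph G \<longleftrightarrow>
     countable (gV G) \<and>
     (\<forall>e\<in>gE G. \<exists>a b. a \<noteq> b \<and> e = {a, b} \<and> fst a \<in> gV G \<and> fst b \<in> gV G) \<and>
     (\<forall>e1\<in>gE G. \<forall>e2\<in>gE G. e1 \<noteq> e2 \<longrightarrow> e1 \<inter> e2 = {}) \<and>
     dom (gsig G) \<subseteq> gV G \<and> dom (gdel G) \<subseteq> gE G"

definition empty_graph :: "('v,'p,'s,'d) graph" where
  "empty_graph = \<lparr>gV = {}, gE = {}, gsig = Map.empty, gdel = Map.empty\<rparr>"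

definition subgraph :: "('v,'p,'s,'d) graph \<Rightarrow> ('v,'p,'s,'d) graph \<Rightarrow> bool" where
  "subgraph G H \<longleftrightarrow> gV G \<subseteq> gV H \<and> gE G \<subseteq> gE H \<and>
     gsig G \<subseteq>\<^sub>m gsig H \<and> gdel G \<subseteq>\<^sub>m gdel H"

definition graph_Union :: "('v,'p,'s,'d) graph set \<Rightarrow> ('v,'p,'s,'d) graph" where
  "graph_Union S = \<lparr>gV = \<Union>(gV ` S), gE = \<Union>(gE ` S),
     gsig = (\<lambda>v. if \<exists>G\<in>S. gsig G v \<noteq> None
                 then gsig (SOME G. G \<in> S \<and> gsig G v \<noteq> None) v else None),
     gdel = (\<lambda>e. if \<exists>G\<in>S. gdel G e \<noteq> None
                 then gdel (SOME G. G \<in> S \<and> gdel G e \<noteq> None) e else None)\<rparr>"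

definition consistent :: "('v,'p,'s,'d) graph \<Rightarrow> ('v,'p,'s,'d) graph \<Rightarrow> bool" where
  "consistent G H \<longleftrightarrow>
     (\<forall>x. gsig G x \<noteq> None \<and> gsig H x \<noteq> None \<longrightarrow> gsig G x = gsig H x) \<and>
     (\<forall>e. gdel G e \<noteq> None \<and> gdel H e \<noteq> None \<longrightarrow> gdel G e = gdel H e) \<and>
     (\<forall>e\<in>gE G. \<forall>e'\<in>gE H. e = e' \<or> e \<inter> e' = {})"

definition rename :: "('v \<Rightarrow> 'v) \<Rightarrow> ('v,'p,'s,'d) graph \<Rightarrow> ('v,'p,'s,'d) graph" where
  "rename R G = \<lparr>gV = R ` gV G,
     gE = (\<lambda>e. (\<lambda>(v,p). (R v, p)) ` e) ` gE G,
     gsig = (\<lambda>v. gsig G (inv R v)),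
     gdel = (\<lambda>e. gdel G ((\<lambda>(v,p). (inv R v, p)) ` e))\<rparr>"

definition rename_pt :: "('v \<Rightarrow> 'v) \<Rightarrow> ('v,'p,'s,'d) graph \<times> 'v \<Rightarrow> ('v,'p,'s,'d) graph \<times> 'v" where
  "rename_pt R D = (rename R (fst D), R (snd D))"

definition adj_rel :: "('v,'p,'s,'d) graph \<Rightarrow> ('v \<times> 'v) set" where
  "adj_rel G = {(u, v). u \<in> gV G \<and> v \<in> gV G \<and> (\<exists>p q. {(u,p), (v,q)} \<in> gE G)}"

definition dist_le :: "('v,'p,'s,'d) graph \<Rightarrow> 'v \<Rightarrow> nat \<Rightarrow> 'v \<Rightarrow> bool" where
  "dist_le G c n v \<longleftrightarrow> c \<in> gV G \<and> (\<exists>k\<le>n. (c, v) \<in> (adj_rel G) ^^ k)"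

definition disk :: "nat \<Rightarrow> ('v,'p,'s,'d) graph \<Rightarrow> 'v \<Rightarrow> ('v,'p,'s,'d) graph" where
  "disk r G c = \<lparr>gV = {v \<in> gV G. dist_le G c (Suc r) v},
     gE = {e \<in> gE G. \<exists>(v,p)\<in>e. dist_le G c r v},
     gsig = gsig G |` {v. dist_le G c r v},
     gdel = gdel G |` {e \<in> gE G. \<exists>(v,p)\<in>e. dist_le G c r v}\<rparr>"

definition disks :: "nat \<Rightarrow> (('v,'p,'s,'d) graph \<times> 'v) set" where
  "disks r = {(disk r G c, c) | G c. wf_graph G \<and> c \<in> gV G}"

definition local_rule :: "nat \<Rightarrow> (('v,'p,'s,'d) graph \<times> 'v \<Rightarrow> ('v,'p,'s,'d) graph) \<Rightarrow> bool" where
  "local_rule r f \<longleftrightarrow>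
     (\<forall>D\<in>disks r. wf_graph (f D)) \<and>
     \<comment> \<open>renaming covariance\<close>
     (\<forall>R. bij R \<longrightarrow> (\<exists>R'. bij R' \<and> (\<forall>D\<in>disks r. f (rename_pt R D) = rename R' (f D)))) \<and>
     \<comment> \<open>preservation of empty intersections\<close>
     (\<forall>D1\<in>disks r. \<forall>D2\<in>disks r. gV (fst D1) \<inter> gV (fst D2) = {} \<longrightarrow> gV (f D1) \<inter> gV (f D2) = {}) \<and>
     \<comment> \<open>bounded output size\<close>
     (\<exists>b::nat. \<forall>D\<in>disks r. finite (gV (f D)) \<and> card (gV (f D)) \<le> b) \<and>
     \<comment> \<open>consistency\<close>
     (\<forall>G. wf_graph G \<longrightarrow> (\<forall>u\<in>gV G. \<forall>v\<in>gV G. consistent (f (disk r G u, u)) (f (disk r G v, v))))"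

definition monotonic_rule :: "nat \<Rightarrow> (('v,'p,'s,'d) graph \<times> 'v \<Rightarrow> ('v,'p,'s,'d) graph) \<Rightarrow> bool" where
  "monotonic_rule r f \<longleftrightarrow>
     (\<forall>D1\<in>disks r. \<forall>D2\<in>disks r. snd D1 = snd D2 \<and> subgraph (fst D1) (fst D2) \<longrightarrow> subgraph (f D1) (f D2))"

definition CGD :: "nat \<Rightarrow> (('v,'p,'s,'d) graph \<times> 'v \<Rightarrow> ('v,'p,'s,'d) graph)
                    \<Rightarrow> ('v,'p,'s,'d) graph \<Rightarrow> ('v,'p,'s,'d) graph" where
  "CGD r f G = graph_Union {f (disk r G v, v) | v. v \<in> gV G}"

definition Conj :: "(('v,'p,'s,'d) graph \<Rightarrow> ('v,'p,'s,'d) graph) \<Rightarrow> ('v \<Rightarrow> 'v) \<Rightarrow> ('v \<Rightarrow> 'v) set" where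
  "Conj F R = {R'. bij R' \<and> (\<forall>G. wf_graph G \<longrightarrow> F (rename R G) = rename R' (F G))}"

record ('o,'m) category =
  Ob :: "'o set"
  Hom :: "'o \<Rightarrow> 'o \<Rightarrow> 'm set"
  Comp :: "'m \<Rightarrow> 'm \<Rightarrow> 'm"   \<comment> \<open>Comp g f = g after f\<close>

definition cocone :: "('o,'m) category \<Rightarrow> ('j,'n) category \<Rightarrow> ('j \<Rightarrow> 'o) \<Rightarrow> ('n \<Rightarrow> 'm)
                       \<Rightarrow> 'o \<Rightarrow> ('j \<Rightarrow> 'm) \<Rightarrow> bool" where
  "cocone C J DO DM X L \<longleftrightarrow> X \<in> Ob C \<and>
     (\<forall>j\<in>Ob J. L j \<in> Hom C (DO j) X) \<and>
     (\<forall>j1\<in>Ob J. \<forall>j2\<in>Ob J. \<forall>n\<in>Hom J j1 j2. Comp C (L j2) (DM n) = L j1)"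

definition is_colimit :: "('o,'m) category \<Rightarrow> ('j,'n) category \<Rightarrow> ('j \<Rightarrow> 'o) \<Rightarrow> ('n \<Rightarrow> 'm)
                       \<Rightarrow> 'o \<Rightarrow> ('j \<Rightarrow> 'm) \<Rightarrow> bool" where
  "is_colimit C J DO DM X L \<longleftrightarrow> cocone C J DO DM X L \<and>
     (\<forall>Y M. cocone C J DO DM Y M \<longrightarrow>
        (\<exists>!u. u \<in> Hom C X Y \<and> (\<forall>j\<in>Ob J. Comp C u (L j) = M j)))"

text \<open>Comma category i/b: objects (a, m : i a -> b), morphisms n : (a1, m o i n) -> (a2, m).\<close>
definition comma :: "('oa,'ma) category \<Rightarrow> ('ob,'mb) category \<Rightarrow> ('oa \<Rightarrow> 'ob) \<Rightarrow> ('ma \<Rightarrow> 'mb)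
                      \<Rightarrow> 'ob \<Rightarrow> ('oa \<times> 'mb, 'ma) category" where
  "comma A B iO iM b = \<lparr>Ob = {(a, m). a \<in> Ob A \<and> m \<in> Hom B (iO a) b},
     Hom = (\<lambda>(a1, m1) (a2, m2). {n \<in> Hom A a1 a2. m1 = Comp B m2 (iM n)}),
     Comp = Comp A\<rparr>"

text \<open>Phi is a pointwise left Kan extension of f along i, i.e. Phi is naturally isomorphic
to Colim (f o Proj_{i/-}).  Equivalently (and without choosing colimits): for every
object b there is a colimit cocone of f o Proj_{i/b} with apex Phi b, and these cocones
are natural in b (for g : b -> b', Phi g is the map induced by i/g).\<close>
definition pointwise_lan ::
  "('oa,'ma) category \<Rightarrow> ('ob,'mb) category \<Rightarrow> ('oc,'mc) category
   \<Rightarrow> ('oa \<Rightarrow> 'ob) \<Rightarrow> ('ma \<Rightarrow> 'mb) \<Rightarrow> ('oa \<Rightarrow> 'oc) \<Rightarrow> ('ma \<Rightarrow> 'mc)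
   \<Rightarrow> ('ob \<Rightarrow> 'oc) \<Rightarrow> ('mb \<Rightarrow> 'mc) \<Rightarrow> bool" where
  "pointwise_lan A B C iO iM fO fM PhiO PhiM \<longleftrightarrow>
     (\<exists>L :: 'ob \<Rightarrow> ('oa \<times> 'mb) \<Rightarrow> 'mc.
        (\<forall>b\<in>Ob B. is_colimit C (comma A B iO iM b) (fO \<circ> fst) fM (PhiO b) (L b)) \<and>
        (\<forall>b\<in>Ob B. \<forall>b'\<in>Ob B. \<forall>g\<in>Hom B b b'. \<forall>j\<in>Ob (comma A B iO iM b).
            Comp C (PhiM g) (L b j) = L b' (fst j, Comp B g (snd j))))"

definition Gcat :: "(('v,'p,'s,'d) graph, 'v \<Rightarrow> 'v) category" where
  "Gcat = \<lparr>Ob = {G. wf_graph G},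
     Hom = (\<lambda>G H. {R. bij R \<and> subgraph (rename R G) H}),
     Comp = (\<circ>)\<rparr>"

definition Dcat :: "nat \<Rightarrow> (('v,'p,'s,'d) graph \<times> 'v set, 'v \<Rightarrow> 'v) category" where
  "Dcat r = \<lparr>Ob = {(H, {c}) | H c. (H, c) \<in> disks r} \<union> {(empty_graph, {})},
     Hom = (\<lambda>(H1, C1) (H2, C2). {R \<in> Hom Gcat H1 H2. R ` C1 \<subseteq> C2}),
     Comp = (\<circ>)\<rparr>"

definition ftildeO :: "(('v,'p,'s,'d) graph \<times> 'v \<Rightarrow> ('v,'p,'s,'d) graph)
                        \<Rightarrow> ('v,'p,'s,'d) graph \<times> 'v set \<Rightarrow> ('v,'p,'s,'d) graph" where
  "ftildeO f HC = (if snd HC = {} then empty_graph else f (fst HC, the_elem (snd HC)))"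

end

theory Submission
  imports Defs
begin

text \<open>
  The cocone over \<open>f \<circ> Proj\<close> with apex \<open>F(G)\<close> has the leg \<open>Fbar m\<close> at every object
  \<open>((H, {c}), m)\<close> of \<open>i/G\<close>. It consists of graph morphisms because a disk is its own
  disk, so \<open>f(H, c) \<subseteq> F(H)\<close>, and \<open>Fbar m\<close> carries \<open>F(H)\<close> onto \<open>F(m H) \<subseteq> F(G)\<close> by
  monotonicity of \<open>F\<close>. It is universal because of the empty object: every object \<open>(a, m)\<close>
  receives \<open>id\<close> from \<open>((\<emptyset>, \<emptyset>), m)\<close>, which is sent by \<open>m\<close> to \<open>((\<emptyset>, \<emptyset>), id)\<close>.
  Hence a cocone \<open>N\<close> is determined by \<open>u = N((\<emptyset>, \<emptyset>), id)\<close> through \<open>N(a, m) = u \<circ> Fbar m\<close>,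
  and \<open>u\<close> is a morphism \<open>F(G) \<rightarrow> Y\<close> because \<open>F(G)\<close> is the union of the \<open>f(G\<^sup>r\<^sub>v, v)\<close>,
  the sources of the legs at \<open>((G\<^sup>r\<^sub>v, {v}), id)\<close>. Since \<open>Conj\<^sub>F(R)\<close> is the singleton
  \<open>{Fbar R}\<close>, \<open>Fbar\<close> is functorial, which gives both the cocone condition and naturality in \<open>G\<close>.
\<close>

subsection \<open>Subgraphs and renamings\<close>

lemma subgraph_trans: "subgraph A B \<Longrightarrow> subgraph B C \<Longrightarrow> subgraph A C"
  unfolding subgraph_def by (auto intro: map_le_trans)

lemma subgraph_antisym: "subgraph A B \<Longrightarrow> subgraph B A \<Longrightarrow> A = B"
  unfolding subgraph_def by (intro graph.equality) (auto intro: map_le_antisym)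

lemma empty_subgraph: "subgraph empty_graph G"
  by (simp add: subgraph_def empty_graph_def)

lemma map_le_restrict_map: "dom m \<subseteq> A \<Longrightarrow> m \<subseteq>\<^sub>m m |` A"
  by (auto simp: map_le_def)

lemma restrict_map_mono: "m \<subseteq>\<^sub>m m' \<Longrightarrow> A \<subseteq> B \<Longrightarrow> m |` A \<subseteq>\<^sub>m m' |` B"
  by (auto simp: map_le_def)

lemma wf_graphD:
  assumes "wf_graph G"
  shows "countable (gV G)"
    and "e \<in> gE G \<Longrightarrow> \<exists>a b. a \<noteq> b \<and> e = {a, b} \<and> fst a \<in> gV G \<and> fst b \<in> gV G"
    and "e1 \<in> gE G \<Longrightarrow> e2 \<in> gE G \<Longrightarrow> e1 \<noteq> e2 \<Longrightarrow> e1 \<inter> e2 = {}"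
    and "dom (gsig G) \<subseteq> gV G"
    and "dom (gdel G) \<subseteq> gE G"
  using assms unfolding wf_graph_def by blast+

lemma rename_id [simp]: "rename id G = G"
  by (simp add: rename_def)

lemma rename_comp: "bij a \<Longrightarrow> bij b \<Longrightarrow> rename (a \<circ> b) G = rename a (rename b G)"
  by (simp add: rename_def o_inv_distrib image_image case_prod_beta)

lemma rename_inv_rename: "bij u \<Longrightarrow> rename (inv u) (rename u G) = G"
  by (metis bij_betw_def bij_imp_bij_inv inv_o_cancel rename_comp rename_id)

lemma rename_rename_inv: "bij u \<Longrightarrow> rename u (rename (inv u) G) = G"
  by (metis bij_imp_bij_inv bij_is_surj rename_comp rename_id surj_iff)

lemma rename_empty_graph [simp]: "rename R empty_graph = empty_graph"
  by (simp add: rename_def empty_graph_def)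

lemma subgraph_rename: "subgraph X Y \<Longrightarrow> subgraph (rename R X) (rename R Y)"
  unfolding subgraph_def rename_def map_le_def by (auto simp: dom_def)

lemma subgraph_rename_iff:
  "bij u \<Longrightarrow> subgraph (rename u X) Y \<longleftrightarrow> subgraph X (rename (inv u) Y)"
  by (metis rename_inv_rename rename_rename_inv subgraph_rename)

lemma wf_graph_rename:
  assumes R: "bij R" and G: "wf_graph G"
  shows "wf_graph (rename R G)"
proof -
  let ?h = "\<lambda>(v::'a, p::'b). (R v, p)"
  have inj_h: "inj ?h"
    using bij_is_inj[OF R] by (auto simp: inj_def)
  have R_inv: "R (inv R v) = v" for v
    using R by (simp add: bij_is_surj surj_f_inv_f)
  have h_back: "?h ` (\<lambda>(v, p). (inv R v, p)) ` e = e" for e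
    by (simp add: image_image case_prod_beta R_inv)
  have E: "gE (rename R G) = (`) ?h ` gE G"
    by (simp add: rename_def)
  show ?thesis
    unfolding wf_graph_def
  proof (intro conjI ballI impI)
    show "countable (gV (rename R G))"
      using wf_graphD(1)[OF G] by (simp add: rename_def)
  next
    fix e assume "e \<in> gE (rename R G)"
    then obtain e0 where "e0 \<in> gE G" and e: "e = ?h ` e0"
      unfolding E by blast
    then obtain a b where "a \<noteq> b" "e0 = {a, b}" "fst a \<in> gV G" "fst b \<in> gV G"
      using wf_graphD(2)[OF G] by blast
    moreover have "?h a \<noteq> ?h b"
      using \<open>a \<noteq> b\<close> inj_h unfolding inj_def by blast
    moreover have "fst (?h a) = R (fst a)" "fst (?h b) = R (fst b)"
      by (simp_all add: case_prod_beta)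
    ultimately show "\<exists>a b. a \<noteq> b \<and> e = {a, b} \<and> fst a \<in> gV (rename R G) \<and> fst b \<in> gV (rename R G)"
      unfolding e by (intro exI[of _ "?h a"] exI[of _ "?h b"]) (simp add: rename_def)
  next
    fix e1 e2 assume "e1 \<in> gE (rename R G)" "e2 \<in> gE (rename R G)" "e1 \<noteq> e2"
    then obtain e1' e2' where "e1' \<in> gE G" "e2' \<in> gE G" "e1' \<noteq> e2'"
      and "e1 = ?h ` e1'" "e2 = ?h ` e2'"
      unfolding E by blast
    then show "e1 \<inter> e2 = {}"
      using wf_graphD(3)[OF G] image_Int[OF inj_h, symmetric] by (metis image_empty)
  next
    show "dom (gsig (rename R G)) \<subseteq> gV (rename R G)"
    proof
      fix v assume "v \<in> dom (gsig (rename R G))"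
      then have "inv R v \<in> gV G"
        using wf_graphD(4)[OF G] by (auto simp: rename_def)
      then show "v \<in> gV (rename R G)"
        unfolding rename_def by (simp add: image_iff) (metis R_inv)
    qed
  next
    show "dom (gdel (rename R G)) \<subseteq> gE (rename R G)"
    proof
      fix e assume "e \<in> dom (gdel (rename R G))"
      then have "(\<lambda>(v, p). (inv R v, p)) ` e \<in> gE G"
        using wf_graphD(5)[OF G] by (auto simp: rename_def)
      then show "e \<in> gE (rename R G)"
        unfolding E by (metis h_back image_eqI)
    qed
  qed
qed

subsection \<open>Distances and disks\<close>

lemma relpow_mono: "(A :: 'a rel) \<subseteq> B \<Longrightarrow> A ^^ k \<subseteq> B ^^ k"
  by (induction k) (simp_all add: relcomp_mono)

lemma adj_rel_mono: "subgraph K G \<Longrightarrow> adj_rel K \<subseteq> adj_rel G"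
  unfolding adj_rel_def subgraph_def by blast

lemma dist_le_mono: "subgraph K G \<Longrightarrow> dist_le K c n v \<Longrightarrow> dist_le G c n v"
  using relpow_mono[OF adj_rel_mono] unfolding dist_le_def subgraph_def by blast

lemma dist_le_SucI: "dist_le G c n v \<Longrightarrow> dist_le G c (Suc n) v"
  unfolding dist_le_def using le_SucI by blast

lemma dist_le_Suc: "dist_le G c n w \<Longrightarrow> (w, v) \<in> adj_rel G \<Longrightarrow> dist_le G c (Suc n) v"
  unfolding dist_le_def by (meson Suc_le_mono relpow_Suc_I)

lemma dist_le_self: "c \<in> gV G \<Longrightarrow> dist_le G c n c"
  unfolding dist_le_def by (auto intro: exI[of _ 0])

lemma disk_simps:
  "gV (disk r G c) = {v \<in> gV G. dist_le G c (Suc r) v}"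
  "gE (disk r G c) = {e \<in> gE G. \<exists>(v, p)\<in>e. dist_le G c r v}"
  "gsig (disk r G c) = gsig G |` {v. dist_le G c r v}"
  "gdel (disk r G c) = gdel G |` gE (disk r G c)"
  by (simp_all add: disk_def)

lemma center_in_disk: "c \<in> gV G \<Longrightarrow> c \<in> gV (disk r G c)"
  by (simp add: disk_simps dist_le_self)

lemma disk_in_disks: "wf_graph G \<Longrightarrow> c \<in> gV G \<Longrightarrow> (disk r G c, c) \<in> disks r"
  unfolding disks_def by blast

lemma disk_subgraph: "subgraph (disk r G c) G"
  unfolding subgraph_def disk_def map_le_def by (auto simp: restrict_map_def)

lemma disk_mono:
  assumes "subgraph K G"
  shows "subgraph (disk r K c) (disk r G c)"
proof -
  note dist = dist_le_mono[OF assms]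
  have V: "gV K \<subseteq> gV G" and E: "gE K \<subseteq> gE G"
    and sig: "gsig K \<subseteq>\<^sub>m gsig G" and del: "gdel K \<subseteq>\<^sub>m gdel G"
    using assms unfolding subgraph_def by auto
  have edges: "gE (disk r K c) \<subseteq> gE (disk r G c)"
    using E dist by (fastforce simp: disk_simps)
  show ?thesis
    unfolding subgraph_def
  proof (intro conjI)
    show "gV (disk r K c) \<subseteq> gV (disk r G c)"
      using V dist by (auto simp: disk_simps)
    show "gsig (disk r K c) \<subseteq>\<^sub>m gsig (disk r G c)"
      unfolding disk_simps(3) using sig dist by (blast intro: restrict_map_mono)
    show "gdel (disk r K c) \<subseteq>\<^sub>m gdel (disk r G c)"
      unfolding disk_simps(4)[of r K] disk_simps(4)[of r G] using del edges by (rule restrict_map_mono)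
  qed (fact edges)
qed

lemma wf_graph_disk:
  assumes G: "wf_graph G"
  shows "wf_graph (disk r G c)"
  unfolding wf_graph_def
proof (intro conjI ballI impI)
  show "countable (gV (disk r G c))"
    using wf_graphD(1)[OF G] by (simp add: disk_simps)
next
  fix e assume "e \<in> gE (disk r G c)"
  then have e: "e \<in> gE G" and near: "\<exists>(v, p)\<in>e. dist_le G c r v"
    by (simp_all add: disk_simps)
  obtain a b where ab: "a \<noteq> b" "e = {a, b}" "fst a \<in> gV G" "fst b \<in> gV G"
    using wf_graphD(2)[OF G e] by blast
  have "{(fst a, snd a), (fst b, snd b)} \<in> gE G" "{(fst b, snd b), (fst a, snd a)} \<in> gE G"
    using e ab(2) by (metis insert_commute prod.collapse)+
  then have "(fst a, fst b) \<in> adj_rel G" "(fst b, fst a) \<in> adj_rel G"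
    using ab(3,4) unfolding adj_rel_def by blast+
  moreover have "dist_le G c r (fst a) \<or> dist_le G c r (fst b)"
    using near ab(2) by auto
  ultimately have "dist_le G c (Suc r) (fst a)" "dist_le G c (Suc r) (fst b)"
    using dist_le_SucI[of G c r] dist_le_Suc[of G c r] by blast+
  then show "\<exists>a b. a \<noteq> b \<and> e = {a, b} \<and> fst a \<in> gV (disk r G c) \<and> fst b \<in> gV (disk r G c)"
    using ab by (intro exI[of _ a] exI[of _ b]) (simp add: disk_simps)
next
  fix e1 e2 assume "e1 \<in> gE (disk r G c)" "e2 \<in> gE (disk r G c)" "e1 \<noteq> e2"
  then show "e1 \<inter> e2 = {}"
    using wf_graphD(3)[OF G] by (simp add: disk_simps)
next
  show "dom (gsig (disk r G c)) \<subseteq> gV (disk r G c)"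
    using wf_graphD(4)[OF G] dist_le_SucI[of G c r] by (auto simp: disk_simps)
next
  show "dom (gdel (disk r G c)) \<subseteq> gE (disk r G c)"
    by (simp add: disk_simps(4)[of r G])
qed

lemma relpow_adj_rel_disk:
  assumes "k \<le> Suc r" "(c, v) \<in> adj_rel G ^^ k" "c \<in> gV G"
  shows "(c, v) \<in> adj_rel (disk r G c) ^^ k"
  using assms(1,2)
proof (induction k arbitrary: v)
  case 0
  then show ?case by simp
next
  case (Suc k)
  then obtain w where w: "(c, w) \<in> adj_rel G ^^ k" "(w, v) \<in> adj_rel G"
    by auto
  then obtain p q where edge: "{(w, p), (v, q)} \<in> gE G" "w \<in> gV G" "v \<in> gV G"
    unfolding adj_rel_def by blast
  have near: "dist_le G c r w"
    using w(1) Suc.prems(1) assms(3) unfolding dist_le_def by auto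
  then have "w \<in> gV (disk r G c)" "v \<in> gV (disk r G c)"
    using edge dist_le_SucI[OF near] dist_le_Suc[OF near w(2)] by (simp_all add: disk_simps)
  moreover have "{(w, p), (v, q)} \<in> gE (disk r G c)"
    using edge(1) near by (auto simp: disk_simps)
  ultimately have "(w, v) \<in> adj_rel (disk r G c)"
    unfolding adj_rel_def by blast
  moreover have "(c, w) \<in> adj_rel (disk r G c) ^^ k"
    using Suc w(1) by simp
  ultimately show ?case
    by (blast intro: relpow_Suc_I)
qed

lemma dist_le_disk: "n \<le> Suc r \<Longrightarrow> dist_le G c n v \<Longrightarrow> dist_le (disk r G c) c n v"
  unfolding dist_le_def using relpow_adj_rel_disk center_in_disk by (metis order_trans)

lemma subgraph_disk_disk: "subgraph (disk r G c) (disk r (disk r G c) c)"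
proof -
  let ?D = "disk r G c"
  have near: "dist_le G c r v \<Longrightarrow> dist_le ?D c r v"
    and far: "dist_le G c (Suc r) v \<Longrightarrow> dist_le ?D c (Suc r) v" for v
    by (simp_all add: dist_le_disk)
  show ?thesis
    unfolding subgraph_def
  proof (intro conjI)
    show "gV ?D \<subseteq> gV (disk r ?D c)"
      using far by (auto simp: disk_simps)
    show E: "gE ?D \<subseteq> gE (disk r ?D c)"
      using near by (fastforce simp: disk_simps)
    have "dom (gsig ?D) \<subseteq> {v. dist_le ?D c r v}"
      using near by (auto simp: disk_simps)
    then show "gsig ?D \<subseteq>\<^sub>m gsig (disk r ?D c)"
      by (simp add: disk_simps(3)[of r ?D] map_le_restrict_map)
    show "gdel ?D \<subseteq>\<^sub>m gdel (disk r ?D c)"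
      using E by (simp add: disk_simps(4)[of r ?D] disk_simps(4)[of r G] Int_absorb2)
  qed
qed

lemma disk_disk: "disk r (disk r G c) c = disk r G c"
  by (simp add: subgraph_antisym disk_subgraph subgraph_disk_disk)

lemma disks_wf_graph: "(H, c) \<in> disks r \<Longrightarrow> wf_graph H"
  unfolding disks_def by (auto intro: wf_graph_disk)

lemma disks_center: "(H, c) \<in> disks r \<Longrightarrow> c \<in> gV H"
  unfolding disks_def by (auto intro: center_in_disk)

lemma disks_disk_eq: "(H, c) \<in> disks r \<Longrightarrow> disk r H c = H"
  unfolding disks_def by (auto simp: disk_disk)

subsection \<open>Unions of pairwise consistent graphs\<close>

definition glue_maps :: "('g \<Rightarrow> 'a \<rightharpoonup> 'b) \<Rightarrow> 'g set \<Rightarrow> 'a \<rightharpoonup> 'b" where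
  "glue_maps l S = (\<lambda>x. if \<exists>G\<in>S. l G x \<noteq> None then l (SOME G. G \<in> S \<and> l G x \<noteq> None) x else None)"

lemma glue_maps_eq_member:
  assumes "\<exists>G\<in>S. l G x \<noteq> None"
  obtains G where "G \<in> S" "l G x \<noteq> None" "glue_maps l S x = l G x"
  using someI_ex[of "\<lambda>G. G \<in> S \<and> l G x \<noteq> None"] assms unfolding glue_maps_def by auto

lemma dom_glue_maps: "dom (glue_maps l S) = (\<Union>G\<in>S. dom (l G))"
proof (intro equalityI subsetI)
  fix x assume "x \<in> dom (glue_maps l S)"
  then show "x \<in> (\<Union>G\<in>S. dom (l G))"
    by (auto simp: glue_maps_def dom_def split: if_splits)
next
  fix x assume "x \<in> (\<Union>G\<in>S. dom (l G))"
  then obtain G where "G \<in> S" "l G x \<noteq> None" "glue_maps l S x = l G x"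
    using glue_maps_eq_member[of S l x] by blast
  then show "x \<in> dom (glue_maps l S)"
    by auto
qed

lemma map_le_glue_maps:
  assumes "s \<in> S"
    and agree: "\<forall>a\<in>S. \<forall>b\<in>S. \<forall>x. l a x \<noteq> None \<and> l b x \<noteq> None \<longrightarrow> l a x = l b x"
  shows "l s \<subseteq>\<^sub>m glue_maps l S"
  unfolding map_le_def
proof
  fix x assume "x \<in> dom (l s)"
  then obtain G where "G \<in> S" "l G x \<noteq> None" "glue_maps l S x = l G x"
    using glue_maps_eq_member[of S l x] \<open>s \<in> S\<close> by blast
  with agree \<open>s \<in> S\<close> \<open>x \<in> dom (l s)\<close> show "l s x = glue_maps l S x"
    by auto
qed

lemma glue_maps_map_le:
  assumes "\<forall>s\<in>S. l s \<subseteq>\<^sub>m m"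
  shows "glue_maps l S \<subseteq>\<^sub>m m"
  unfolding map_le_def
proof
  fix x assume "x \<in> dom (glue_maps l S)"
  then obtain G where "G \<in> S" "l G x \<noteq> None" "glue_maps l S x = l G x"
    using glue_maps_eq_member[of S l x] by (auto simp: dom_glue_maps)
  with assms show "glue_maps l S x = m x"
    unfolding map_le_def by auto
qed

lemma graph_Union_simps:
  "gV (graph_Union S) = (\<Union>G\<in>S. gV G)"
  "gE (graph_Union S) = (\<Union>G\<in>S. gE G)"
  "gsig (graph_Union S) = glue_maps gsig S"
  "gdel (graph_Union S) = glue_maps gdel S"
  by (simp_all add: graph_Union_def glue_maps_def)

lemma graph_Union_upper:
  assumes "s \<in> S" "\<forall>a\<in>S. \<forall>b\<in>S. consistent a b"
  shows "subgraph s (graph_Union S)"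
proof -
  have "\<forall>a\<in>S. \<forall>b\<in>S. \<forall>x. gsig a x \<noteq> None \<and> gsig b x \<noteq> None \<longrightarrow> gsig a x = gsig b x"
    "\<forall>a\<in>S. \<forall>b\<in>S. \<forall>e. gdel a e \<noteq> None \<and> gdel b e \<noteq> None \<longrightarrow> gdel a e = gdel b e"
    using assms(2) unfolding consistent_def by blast+
  with assms(1) show ?thesis
    unfolding subgraph_def graph_Union_simps by (blast intro: map_le_glue_maps)
qed

lemma graph_Union_least: "\<forall>s\<in>S. subgraph s Y \<Longrightarrow> subgraph (graph_Union S) Y"
  unfolding subgraph_def graph_Union_simps by (auto intro!: glue_maps_map_le)

lemma wf_graph_Union:
  assumes wf: "\<forall>s\<in>S. wf_graph s" and cons: "\<forall>a\<in>S. \<forall>b\<in>S. consistent a b"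
    and countable: "countable (\<Union>s\<in>S. gV s)"
  shows "wf_graph (graph_Union S)"
  unfolding wf_graph_def graph_Union_simps dom_glue_maps
proof (intro conjI ballI impI)
  fix e assume "e \<in> (\<Union>s\<in>S. gE s)"
  then obtain s where "s \<in> S" "e \<in> gE s" by blast
  then obtain a b where "a \<noteq> b" "e = {a, b}" "fst a \<in> gV s" "fst b \<in> gV s"
    using wf wf_graphD(2) by blast
  with \<open>s \<in> S\<close> show "\<exists>a b. a \<noteq> b \<and> e = {a, b} \<and> fst a \<in> (\<Union>s\<in>S. gV s) \<and> fst b \<in> (\<Union>s\<in>S. gV s)"
    by blast
next
  fix e1 e2 assume "e1 \<in> (\<Union>s\<in>S. gE s)" "e2 \<in> (\<Union>s\<in>S. gE s)" "e1 \<noteq> e2"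
  moreover have "\<forall>a\<in>S. \<forall>b\<in>S. \<forall>e\<in>gE a. \<forall>e'\<in>gE b. e = e' \<or> e \<inter> e' = {}"
    using cons unfolding consistent_def by blast
  ultimately show "e1 \<inter> e2 = {}"
    by blast
next
  show "(\<Union>s\<in>S. dom (gsig s)) \<subseteq> (\<Union>s\<in>S. gV s)" "(\<Union>s\<in>S. dom (gdel s)) \<subseteq> (\<Union>s\<in>S. gE s)"
    using wf by (intro UN_mono subset_refl; simp add: wf_graphD)+
qed (fact countable)

subsection \<open>The causal graph dynamics\<close>

lemma CGD_eq_graph_Union: "CGD r f G = graph_Union ((\<lambda>v. f (disk r G v, v)) ` gV G)"
  by (simp add: CGD_def Setcompr_eq_image)

lemma local_rule_consistent:
  assumes "local_rule r f" "wf_graph G"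
  shows "\<forall>a\<in>(\<lambda>v. f (disk r G v, v)) ` gV G. \<forall>b\<in>(\<lambda>v. f (disk r G v, v)) ` gV G. consistent a b"
  using assms unfolding local_rule_def by blast

lemma rule_subgraph_CGD:
  assumes "local_rule r f" "wf_graph G" "v \<in> gV G"
  shows "subgraph (f (disk r G v, v)) (CGD r f G)"
  unfolding CGD_eq_graph_Union
  using assms(3) by (intro graph_Union_upper local_rule_consistent[OF assms(1,2)]) simp

lemma wf_graph_CGD:
  assumes L: "local_rule r f" and G: "wf_graph G"
  shows "wf_graph (CGD r f G)"
  unfolding CGD_eq_graph_Union
proof (rule wf_graph_Union[OF _ local_rule_consistent[OF L G]])
  have "\<forall>D\<in>disks r. wf_graph (f D) \<and> finite (gV (f D))"
    using L unfolding local_rule_def by blast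
  then have "wf_graph (f (disk r G v, v)) \<and> countable (gV (f (disk r G v, v)))" if "v \<in> gV G" for v
    using disk_in_disks[OF G that] by (blast intro: countable_finite)
  moreover have "countable (gV G)"
    using G by (rule wf_graphD)
  ultimately show "\<forall>s\<in>(\<lambda>v. f (disk r G v, v)) ` gV G. wf_graph s"
    and "countable (\<Union>s\<in>(\<lambda>v. f (disk r G v, v)) ` gV G. gV s)"
    by auto
qed

lemma CGD_mono:
  assumes L: "local_rule r f" and M: "monotonic_rule r f"
    and K: "wf_graph K" and G: "wf_graph G" and sub: "subgraph K G"
  shows "subgraph (CGD r f K) (CGD r f G)"
  unfolding CGD_eq_graph_Union[of r f K]
proof (rule graph_Union_least, intro ballI)
  fix s assume "s \<in> (\<lambda>v. f (disk r K v, v)) ` gV K"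
  then obtain v where s: "s = f (disk r K v, v)" and "v \<in> gV K" by blast
  then have "v \<in> gV G"
    using sub unfolding subgraph_def by blast
  have "subgraph (f (disk r K v, v)) (f (disk r G v, v))"
    using M disk_in_disks[OF K \<open>v \<in> gV K\<close>] disk_in_disks[OF G \<open>v \<in> gV G\<close>] disk_mono[OF sub]
    unfolding monotonic_rule_def by auto
  then show "subgraph s (CGD r f G)"
    unfolding s using rule_subgraph_CGD[OF L G \<open>v \<in> gV G\<close>] by (rule subgraph_trans)
qed

lemma rule_subgraph_CGD_disk:
  assumes "local_rule r f" "(H, c) \<in> disks r"
  shows "subgraph (f (H, c)) (CGD r f H)"
  using rule_subgraph_CGD[OF assms(1) disks_wf_graph disks_center, OF assms(2) assms(2)]
  by (simp add: disks_disk_eq[OF assms(2)])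

subsection \<open>Conjugate renamings\<close>

lemma bij_conj: "\<forall>R. bij R \<longrightarrow> Conj F R = {Fbar R} \<Longrightarrow> bij R \<Longrightarrow> bij (Fbar R)"
  unfolding Conj_def by blast

lemma rename_conj:
  "\<forall>R. bij R \<longrightarrow> Conj F R = {Fbar R} \<Longrightarrow> bij R \<Longrightarrow> wf_graph G
    \<Longrightarrow> F (rename R G) = rename (Fbar R) (F G)"
  unfolding Conj_def by blast

lemma conj_unique:
  assumes "\<forall>R. bij R \<longrightarrow> Conj F R = {Fbar R}" "bij R" "bij R'"
    and "\<And>G. wf_graph G \<Longrightarrow> F (rename R G) = rename R' (F G)"
  shows "R' = Fbar R"
  using assms unfolding Conj_def by blast

lemma conj_comp:
  fixes F :: "('v, 'p, 's, 'd) graph \<Rightarrow> ('v, 'p, 's, 'd) graph"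
  assumes conj: "\<forall>R. bij R \<longrightarrow> Conj F R = {Fbar R}" and a: "bij a" and b: "bij b"
  shows "Fbar (a \<circ> b) = Fbar a \<circ> Fbar b"
proof (rule conj_unique[OF conj bij_comp[OF b a], symmetric])
  show "bij (Fbar a \<circ> Fbar b)"
    using bij_comp bij_conj[OF conj] a b by blast
  fix G :: "('v, 'p, 's, 'd) graph" assume G: "wf_graph G"
  have "F (rename (a \<circ> b) G) = F (rename a (rename b G))"
    by (simp add: rename_comp a b)
  also have "\<dots> = rename (Fbar a) (rename (Fbar b) (F G))"
    using rename_conj[OF conj b G] rename_conj[OF conj a wf_graph_rename[OF b G]] by simp
  also have "\<dots> = rename (Fbar a \<circ> Fbar b) (F G)"
    by (simp add: rename_comp bij_conj[OF conj] a b)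
  finally show "F (rename (a \<circ> b) G) = rename (Fbar a \<circ> Fbar b) (F G)" .
qed

lemma conj_id:
  assumes "\<forall>R. bij R \<longrightarrow> Conj F R = {Fbar R}"
  shows "Fbar id = id"
  using conj_unique[OF assms bij_id bij_id] by simp

lemma rename_rule_subgraph_CGD:
  assumes L: "local_rule r f" and M: "monotonic_rule r f"
    and conj: "\<forall>R. bij R \<longrightarrow> Conj (CGD r f) R = {Fbar R}"
    and D: "(H, c) \<in> disks r" and m: "bij m" and sub: "subgraph (rename m H) G" and G: "wf_graph G"
  shows "subgraph (rename (Fbar m) (f (H, c))) (CGD r f G)"
proof -
  have H: "wf_graph H"
    using D by (rule disks_wf_graph)
  have "subgraph (rename (Fbar m) (f (H, c))) (rename (Fbar m) (CGD r f H))"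
    using rule_subgraph_CGD_disk[OF L D] by (rule subgraph_rename)
  also have "rename (Fbar m) (CGD r f H) = CGD r f (rename m H)"
    using rename_conj[OF conj m H] by simp
  finally show ?thesis
    using CGD_mono[OF L M wf_graph_rename[OF m H] G sub] subgraph_trans by blast
qed

subsection \<open>The colimit\<close>

lemma Gcat_simps [simp]:
  "Ob Gcat = {G. wf_graph G}"
  "Hom Gcat G H = {R. bij R \<and> subgraph (rename R G) H}"
  "Comp Gcat = (\<circ>)"
  by (simp_all add: Gcat_def)

lemma Dcat_simps [simp]:
  "a \<in> Ob (Dcat r) \<longleftrightarrow> (\<exists>H c. a = (H, {c}) \<and> (H, c) \<in> disks r) \<or> a = (empty_graph, {})"
  "n \<in> Hom (Dcat r) (H1, C1) (H2, C2) \<longleftrightarrow> bij n \<and> subgraph (rename n H1) H2 \<and> n ` C1 \<subseteq> C2"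
  by (auto simp: Dcat_def)

lemma comma_simps [simp]:
  "(a, m) \<in> Ob (comma A B iO iM b) \<longleftrightarrow> a \<in> Ob A \<and> m \<in> Hom B (iO a) b"
  "n \<in> Hom (comma A B iO iM b) (a1, m1) (a2, m2) \<longleftrightarrow> n \<in> Hom A a1 a2 \<and> m1 = Comp B m2 (iM n)"
  by (simp_all add: comma_def)

lemma cocone_CGD:
  assumes L: "local_rule r f" and M: "monotonic_rule r f"
    and conj: "\<forall>R. bij R \<longrightarrow> Conj (CGD r f) R = {Fbar R}" and G: "wf_graph G"
  shows "cocone Gcat (comma (Dcat r) Gcat fst id G) (ftildeO f \<circ> fst) Fbar (CGD r f G) (\<lambda>j. Fbar (snd j))"
  unfolding cocone_def
proof (intro conjI ballI)
  show "CGD r f G \<in> Ob Gcat"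
    using wf_graph_CGD[OF L G] by simp
next
  fix j assume "j \<in> Ob (comma (Dcat r) Gcat fst id G)"
  moreover obtain H C m where j: "j = ((H, C), m)"
    by (metis prod.collapse)
  ultimately have "(H, C) \<in> Ob (Dcat r)" and m: "bij m" and sub: "subgraph (rename m H) G"
    by simp_all
  then consider c where "C = {c}" "(H, c) \<in> disks r" | "H = empty_graph" "C = {}"
    by auto
  then have "subgraph (rename (Fbar m) (ftildeO f (H, C))) (CGD r f G)"
  proof cases
    case 1
    then show ?thesis
      using rename_rule_subgraph_CGD[OF L M conj _ m sub G] by (simp add: ftildeO_def)
  next
    case 2
    then show ?thesis
      by (simp add: ftildeO_def empty_subgraph)
  qed
  then show "Fbar (snd j) \<in> Hom Gcat ((ftildeO f \<circ> fst) j) (CGD r f G)"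
    using bij_conj[OF conj m] j by simp
next
  fix j1 j2 n
  assume j2: "j2 \<in> Ob (comma (Dcat r) Gcat fst id G)" and n: "n \<in> Hom (comma (Dcat r) Gcat fst id G) j1 j2"
  obtain a1 m1 a2 m2 where js: "j1 = (a1, m1)" "j2 = (a2, m2)"
    by fastforce
  have "bij n" "m1 = m2 \<circ> n"
    using n js by (cases a1; cases a2; auto)+
  moreover have "bij m2"
    using j2 js by simp
  ultimately show "Comp Gcat (Fbar (snd j2)) (Fbar n) = Fbar (snd j1)"
    using conj_comp[OF conj] js by simp
qed

lemma cocone_leg_factors_through_empty:
  assumes Fbar_id: "Fbar id = id"
    and N: "cocone Gcat (comma (Dcat r) Gcat fst id G) (ftildeO f \<circ> fst) Fbar Y N"
    and j: "j \<in> Ob (comma (Dcat r) Gcat fst id G)"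
  shows "N j = N ((empty_graph, {}), id) \<circ> Fbar (snd j)"
proof -
  let ?J = "comma (Dcat r) Gcat fst id G"
  have comm: "\<And>j1 j2 n. j1 \<in> Ob ?J \<Longrightarrow> j2 \<in> Ob ?J \<Longrightarrow> n \<in> Hom ?J j1 j2 \<Longrightarrow> N j2 \<circ> Fbar n = N j1"
    using N unfolding cocone_def by simp
  obtain H C m where j_eq: "j = ((H, C), m)"
    by (metis prod.collapse)
  with j have m: "bij m"
    by simp
  let ?e = "((empty_graph, {}), m)"
  have e: "?e \<in> Ob ?J" and e_id: "((empty_graph, {}), id) \<in> Ob ?J"
    using m by (simp_all add: empty_subgraph)
  have "m \<in> Hom ?J ?e ((empty_graph, {}), id)"
    using m by (simp add: empty_subgraph)
  then have "N ((empty_graph, {}), id) \<circ> Fbar m = N ?e"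
    using comm e e_id by blast
  moreover have "id \<in> Hom ?J ?e j"
    using j_eq by (simp add: empty_subgraph)
  then have "N j \<circ> Fbar id = N ?e"
    using comm e j by blast
  ultimately show ?thesis
    using Fbar_id j_eq by simp
qed

lemma cocone_empty_leg_Hom_CGD:
  assumes Fbar_id: "Fbar id = id" and G: "wf_graph G"
    and N: "cocone Gcat (comma (Dcat r) Gcat fst id G) (ftildeO f \<circ> fst) Fbar Y N"
  shows "N ((empty_graph, {}), id) \<in> Hom Gcat (CGD r f G) Y"
proof -
  let ?J = "comma (Dcat r) Gcat fst id G"
  define u where "u = N ((empty_graph, {}), id)"
  have legs: "N j \<in> Hom Gcat ((ftildeO f \<circ> fst) j) Y" if "j \<in> Ob ?J" for j
    using N that unfolding cocone_def by blast
  have "((empty_graph, {}), id) \<in> Ob ?J"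
    by (simp add: empty_subgraph)
  then have u: "bij u"
    using legs unfolding u_def by fastforce
  have "subgraph (CGD r f G) (rename (inv u) Y)"
    unfolding CGD_eq_graph_Union
  proof (rule graph_Union_least, intro ballI)
    fix s assume "s \<in> (\<lambda>v. f (disk r G v, v)) ` gV G"
    then obtain v where s: "s = f (disk r G v, v)" and v: "v \<in> gV G"
      by blast
    let ?jv = "((disk r G v, {v}), id)"
    have jv: "?jv \<in> Ob ?J"
      using disk_in_disks[OF G v] disk_subgraph by fastforce
    then have "N ?jv = u"
      using cocone_leg_factors_through_empty[OF Fbar_id N] Fbar_id unfolding u_def by simp
    with legs[OF jv] have "subgraph (rename u s) Y"
      by (simp add: s ftildeO_def)
    then show "subgraph s (rename (inv u) Y)"
      using subgraph_rename_iff[OF u] by blast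
  qed
  then show ?thesis
    unfolding u_def[symmetric] by (simp add: u subgraph_rename_iff[OF u])
qed

lemma is_colimit_CGD:
  assumes L: "local_rule r f" and M: "monotonic_rule r f"
    and conj: "\<forall>R. bij R \<longrightarrow> Conj (CGD r f) R = {Fbar R}" and G: "wf_graph G"
  shows "is_colimit Gcat (comma (Dcat r) Gcat fst id G) (ftildeO f \<circ> fst) Fbar (CGD r f G) (\<lambda>j. Fbar (snd j))"
  unfolding is_colimit_def
proof (intro conjI allI impI)
  let ?J = "comma (Dcat r) Gcat fst id G"
  show "cocone Gcat ?J (ftildeO f \<circ> fst) Fbar (CGD r f G) (\<lambda>j. Fbar (snd j))"
    using cocone_CGD[OF L M conj G] .
  fix Y N assume N: "cocone Gcat ?J (ftildeO f \<circ> fst) Fbar Y N"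
  have Fbar_id: "Fbar id = id"
    using conj by (rule conj_id)
  let ?u = "N ((empty_graph, {}), id)"
  have e: "((empty_graph, {}), id) \<in> Ob ?J"
    by (simp add: empty_subgraph)
  show "\<exists>!u. u \<in> Hom Gcat (CGD r f G) Y \<and> (\<forall>j\<in>Ob ?J. Comp Gcat u (Fbar (snd j)) = N j)"
  proof (rule ex1I[of _ ?u])
    show "?u \<in> Hom Gcat (CGD r f G) Y \<and> (\<forall>j\<in>Ob ?J. Comp Gcat ?u (Fbar (snd j)) = N j)"
      using cocone_empty_leg_Hom_CGD[OF Fbar_id G N] cocone_leg_factors_through_empty[OF Fbar_id N]
      by simp
  next
    fix u assume "u \<in> Hom Gcat (CGD r f G) Y \<and> (\<forall>j\<in>Ob ?J. Comp Gcat u (Fbar (snd j)) = N j)"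
    then have "u \<circ> Fbar id = ?u"
      using e by fastforce
    then show "u = ?u"
      using Fbar_id by simp
  qed
qed

theorem proposition4p23:
  fixes f :: "('v,'p::finite,'s,'d) graph \<times> 'v \<Rightarrow> ('v,'p,'s,'d) graph"
    and r :: nat
    and Fbar :: "('v \<Rightarrow> 'v) \<Rightarrow> ('v \<Rightarrow> 'v)"
  assumes "uncountable (UNIV :: 'v set)"
    and "local_rule r f"
    and "monotonic_rule r f"
    and "\<forall>R. bij R \<longrightarrow> Conj (CGD r f) R = {Fbar R}"
  shows "pointwise_lan (Dcat r) Gcat Gcat fst id (ftildeO f) Fbar (CGD r f) Fbar"
  unfolding pointwise_lan_def
proof (intro exI[of _ "\<lambda>G j. Fbar (snd j)"] conjI ballI)
  fix G :: "('v, 'p, 's, 'd) graph"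
  assume "G \<in> Ob Gcat"
  then show "is_colimit Gcat (comma (Dcat r) Gcat fst id G) (ftildeO f \<circ> fst) Fbar (CGD r f G) (\<lambda>j. Fbar (snd j))"
    using is_colimit_CGD[OF assms(2-4)] by simp
next
  fix G G' :: "('v, 'p, 's, 'd) graph" and g j
  assume "g \<in> Hom Gcat G G'" and "j \<in> Ob (comma (Dcat r) Gcat fst id G)"
  then have "bij g" "bij (snd j)"
    by (auto simp: comma_def)
  then show "Comp Gcat (Fbar g) (Fbar (snd j)) = Fbar (snd (fst j, Comp Gcat g (snd j)))"
    using conj_comp[OF assms(4)] by simp
qed

end
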